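(* Let $\lambda\ge\Delta^{-1/2}$. For every $y=(s,r,s')$ with $s,s'\in\mathcal S$ and $r\in[0,1]$, and all $(p,g),(q,g')\in\mathcal Z$, \[ d_\lambda\bigl((H_g(p,y),r),(H_{g'}(q,y),r)\bigr)\le d_\lambda\bigl((p,g),(q,g')\bigr). \]
   Context: $\mathcal S=\{1,\dots,m\}$ finite. $\Theta=\{\theta_1<\dots<\theta_d\}$ with constant stride $\Delta>0$; $\Delta_d$ the probability simplex of $\mathbb R^d$; $\Delta_d^{\mathcal S}$ families $(p_i)_{i\in\mathcal S}$ with $p_i\in\Delta_d$; $\mathcal Z:=\Delta_d^{\mathcal S}\times[0,1]$. For $u\in\Delta_d$, $\eta^{u,0}:=\sum_ku_k\delta_{\theta_k}$. Categorical projection $\Pi^\Theta_{\mathrm C}$: $\delta_x\mapsto\delta_{\theta_1}$ if $x\le\theta_1$, $\delta_{\theta_d}$ if $x\ge\theta_d$, $\frac{\theta_{k+1}-x}{\Delta}\delta_{\theta_k}+\frac{x-\theta_k}{\Delta}\delta_{\theta_{k+1}}$ if $\theta_k\le x\le\theta_{k+1}$, extended linearly to laws. For $b\in\mathbb R$, $L_bu\in\Delta_d$ is defined by $\Pi^\Theta_{\mathrm C}(\text{law of }X+b,\ X\sim\eta^{u,0})=\eta^{L_bu,0}$. For $g\in\mathbb R$, $H_g(p,(s,r,s'))=q$ with $q_u=p_u$ for $u\ne s$ and $q_s=L_{r-g}p_{s'}$. Coordinate Cramér metric: $F_u(\theta_k):=\sum_{j\le k}u_j$, $\ell^\Theta_{\mathrm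 C}(u,v)^2:=\Delta\sum_{k=1}^{d-1}(F_u(\theta_k)-F_v(\theta_k))^2$, $\ell^\Theta_{\mathrm C,\infty}(p,q):=\max_i\ell^\Theta_{\mathrm C}(p_i,q_i)$. Product metric $d_\lambda((p,g),(q,g')):=\ell^\Theta_{\mathrm C,\infty}(p,q)+\lambda|g-g'|$. *)

theory Defs
  imports Complex_Main
begin

text \<open>Support grid: atoms theta_k = th1 + (k-1)*Dl, k = 1..d.
  Probability vectors are functions nat => real supported on {1..d}.
  States are {1..m}; a family p is a function nat => (nat => real).\<close>

definition atom :: "real \<Rightarrow> real \<Rightarrow> nat \<Rightarrow> real" where
  "atom th1 Dl k = th1 + real (k - 1) * Dl"

definition simplex :: "nat \<Rightarrow> (nat \<Rightarrow> real) set" where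
  "simplex d = {u. (\<forall>k\<in>{1..d}. 0 \<le> u k) \<and> (\<forall>k. k \<notin> {1..d} \<longrightarrow> u k = 0)
                   \<and> (\<Sum>k=1..d. u k) = 1}"

definition fam_simplex :: "nat \<Rightarrow> nat \<Rightarrow> (nat \<Rightarrow> nat \<Rightarrow> real) set" where
  "fam_simplex m d = {p. \<forall>i\<in>{1..m}. p i \<in> simplex d}"

text \<open>Categorical projection of the Dirac mass at x: weight given to atom theta_k.\<close>
definition cat_proj_dirac :: "real \<Rightarrow> real \<Rightarrow> nat \<Rightarrow> real \<Rightarrow> nat \<Rightarrow> real" where
  "cat_proj_dirac th1 Dl d x k =
     (if k \<notin> {1..d} then 0
      else if x \<le> atom th1 Dl 1 then (if k = 1 then 1 else 0)
      else if x \<ge> atom th1 Dl d then (if k = d then 1 else 0)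
      else if 2 \<le> k \<and> atom th1 Dl (k - 1) \<le> x \<and> x \<le> atom th1 Dl k
        then (x - atom th1 Dl (k - 1)) / Dl
      else if k + 1 \<le> d \<and> atom th1 Dl k \<le> x \<and> x \<le> atom th1 Dl (k + 1)
        then (atom th1 Dl (k + 1) - x) / Dl
      else 0)"

text \<open>L_b u: projection (extended linearly) of the law of X + b, X ~ sum_k u_k delta_{theta_k}.\<close>
definition Lshift :: "real \<Rightarrow> real \<Rightarrow> nat \<Rightarrow> real \<Rightarrow> (nat \<Rightarrow> real) \<Rightarrow> (nat \<Rightarrow> real)" where
  "Lshift th1 Dl d b u = (\<lambda>k. \<Sum>j=1..d. u j * cat_proj_dirac th1 Dl d (atom th1 Dl j + b) k)"

definition Hop :: "real \<Rightarrow> real \<Rightarrow> nat \<Rightarrow> real \<Rightarrow> (nat \<Rightarrow> nat \<Rightarrow> real) \<Rightarrow> nat \<times> real \<times> nat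
                    \<Rightarrow> (nat \<Rightarrow> nat \<Rightarrow> real)" where
  "Hop th1 Dl d g p y = (case y of (s, r, s') \<Rightarrow> p(s := Lshift th1 Dl d (r - g) (p s')))"

definition cdf :: "(nat \<Rightarrow> real) \<Rightarrow> nat \<Rightarrow> real" where
  "cdf u k = (\<Sum>j=1..k. u j)"

definition cramer :: "real \<Rightarrow> nat \<Rightarrow> (nat \<Rightarrow> real) \<Rightarrow> (nat \<Rightarrow> real) \<Rightarrow> real" where
  "cramer Dl d u v = sqrt (Dl * (\<Sum>k=1..d-1. (cdf u k - cdf v k)^2))"

definition cramer_inf :: "real \<Rightarrow> nat \<Rightarrow> nat \<Rightarrow> (nat \<Rightarrow> nat \<Rightarrow> real) \<Rightarrow> (nat \<Rightarrow> nat \<Rightarrow> real) \<Rightarrow> real" where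
  "cramer_inf Dl d m p q = Max ((\<lambda>i. cramer Dl d (p i) (q i)) ` {1..m})"

definition d_lam :: "real \<Rightarrow> real \<Rightarrow> nat \<Rightarrow> nat \<Rightarrow> (nat \<Rightarrow> nat \<Rightarrow> real) \<times> real
                      \<Rightarrow> (nat \<Rightarrow> nat \<Rightarrow> real) \<times> real \<Rightarrow> real" where
  "d_lam lam Dl d m pg qg' = cramer_inf Dl d m (fst pg) (fst qg') + lam * \<bar>snd pg - snd qg'\<bar>"

end

theory Submission
  imports Defs "HOL-Analysis.Convex" "HOL-Analysis.L2_Norm"
begin

text \<open>
  Projecting a Dirac mass at x onto the grid gives the cdf
  k \<mapsto> clamp ((theta_(k+1) - x) / Delta) for 1 \<le> k < d, so the cdf of L_b u is u pushed
  through the kernel clamp (k + 1 - j - b / Delta). Summation by parts writes the cdf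
  difference of L_b u and L_b v as a nonnegative matrix with row and column sums at most 1
  applied to the cdf difference of u and v; by Cauchy-Schwarz such a matrix does not increase
  the l2 norm, so L_b is nonexpansive for the Cramer distance. Moving the shift from b to
  b' \<ge> b lowers every cdf value, each by at most (b' - b) / Delta and all together by at
  most (b' - b) / Delta, hence the Cramer distance between L_b v and L_b' v is at most
  (b' - b) / sqrt Delta. The map H only changes coordinate s, where the triangle inequality
  gives a bound by the Cramer distance of p s' and q s' plus |g - g'| / sqrt Delta, which is
  at most the sup distance of p and q plus lambda |g - g'|.
\<close>

lemma summation_by_parts:
  fixes e t :: "nat \<Rightarrow> 'a::comm_ring"
  shows "(\<Sum>j=1..n. e j * t j)
           = (\<Sum>i=1..n. e i) * t n + (\<Sum>j=1..n-1. (\<Sum>i=1..j. e i) * (t j - t (Suc j)))"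
proof (induction n)
  case (Suc n)
  then show ?case
    by (cases n) (simp_all add: algebra_simps)
qed simp

lemma weighted_Cauchy_Schwarz_sum:
  fixes w a :: "'b \<Rightarrow> real"
  assumes "\<And>j. j \<in> A \<Longrightarrow> 0 \<le> w j"
  shows "(\<Sum>j\<in>A. w j * a j)\<^sup>2 \<le> (\<Sum>j\<in>A. w j) * (\<Sum>j\<in>A. w j * (a j)\<^sup>2)"
proof -
  have "(\<Sum>j\<in>A. sqrt (w j) * (sqrt (w j) * a j))\<^sup>2
      \<le> (\<Sum>j\<in>A. (sqrt (w j))\<^sup>2) * (\<Sum>j\<in>A. (sqrt (w j) * a j)\<^sup>2)"
    by (rule Cauchy_Schwarz_ineq_sum)
  also have "\<dots> = (\<Sum>j\<in>A. w j) * (\<Sum>j\<in>A. w j * (a j)\<^sup>2)"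
    using assms by (simp add: power_mult_distrib)
  finally show ?thesis
    using assms by (simp add: mult.assoc[symmetric])
qed

lemma sum_squares_substochastic_le:
  fixes W :: "'a \<Rightarrow> 'b \<Rightarrow> real"
  assumes nonneg: "\<And>k j. k \<in> K \<Longrightarrow> j \<in> J \<Longrightarrow> 0 \<le> W k j"
    and rows: "\<And>k. k \<in> K \<Longrightarrow> (\<Sum>j\<in>J. W k j) \<le> 1"
    and cols: "\<And>j. j \<in> J \<Longrightarrow> (\<Sum>k\<in>K. W k j) \<le> 1"
  shows "(\<Sum>k\<in>K. (\<Sum>j\<in>J. W k j * E j)\<^sup>2) \<le> (\<Sum>j\<in>J. (E j)\<^sup>2)"
proof -
  have "(\<Sum>k\<in>K. (\<Sum>j\<in>J. W k j * E j)\<^sup>2) \<le> (\<Sum>k\<in>K. (\<Sum>j\<in>J. W k j) * (\<Sum>j\<in>J. W k j * (E j)\<^sup>2))"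
    by (intro sum_mono weighted_Cauchy_Schwarz_sum nonneg)
  also have "\<dots> \<le> (\<Sum>k\<in>K. \<Sum>j\<in>J. W k j * (E j)\<^sup>2)"
    using rows nonneg by (intro sum_mono mult_left_le_one_le sum_nonneg) auto
  also have "\<dots> = (\<Sum>j\<in>J. (E j)\<^sup>2 * (\<Sum>k\<in>K. W k j))"
    by (subst sum.swap) (simp add: sum_distrib_left mult.commute sum_distrib_right)
  also have "\<dots> \<le> (\<Sum>j\<in>J. (E j)\<^sup>2)"
    using cols by (intro sum_mono mult_left_le) auto
  finally show ?thesis .
qed

lemma sum_squares_le_of_sum_le:
  fixes D :: "'a \<Rightarrow> real"
  assumes "\<And>k. k \<in> K \<Longrightarrow> 0 \<le> D k" "\<And>k. k \<in> K \<Longrightarrow> D k \<le> c" "(\<Sum>k\<in>K. D k) \<le> c"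
  shows "(\<Sum>k\<in>K. (D k)\<^sup>2) \<le> c\<^sup>2"
proof (cases "K = {}")
  case False
  then have "0 \<le> c"
    using assms(1,2) by force
  have "(\<Sum>k\<in>K. (D k)\<^sup>2) \<le> (\<Sum>k\<in>K. D k * c)"
    using assms(1,2) by (intro sum_mono) (simp add: power2_eq_square mult_left_mono)
  also have "\<dots> \<le> c * c"
    using assms(3) \<open>0 \<le> c\<close> by (simp add: mult_right_mono flip: sum_distrib_right)
  finally show ?thesis
    by (simp add: power2_eq_square)
qed simp

definition unit_clamp :: "real \<Rightarrow> real" where
  "unit_clamp z = max 0 (min 1 z)"

lemma unit_clamp_mono: "a \<le> b \<Longrightarrow> unit_clamp a \<le> unit_clamp b"
  unfolding unit_clamp_def by simp

lemma unit_clamp_bounds: "0 \<le> unit_clamp a" "unit_clamp a \<le> 1"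
  unfolding unit_clamp_def by auto

lemma unit_clamp_diff_le: "a \<le> b \<Longrightarrow> unit_clamp b - unit_clamp a \<le> b - a"
  unfolding unit_clamp_def by (simp add: max_def min_def)

lemma sum_unit_clamp_shifts:
  "(\<Sum>k=1..n. unit_clamp (real k + c)) = max 0 (real n + c) - max 0 c"
  by (induction n) (auto simp: unit_clamp_def max_def min_def)

lemma atom_eq: "k \<ge> 1 \<Longrightarrow> atom th1 Dl k = th1 + (real k - 1) * Dl"
  unfolding atom_def by (simp add: of_nat_diff)

lemma cat_proj_dirac_first:
  assumes "Dl > 0" "2 \<le> d"
  shows "cat_proj_dirac th1 Dl d x 1 = unit_clamp ((atom th1 Dl 2 - x) / Dl)"
proof -
  have "th1 + Dl \<le> atom th1 Dl d"
    using assms atom_eq[of d th1 Dl] by (simp add: mult_right_mono)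
  moreover have "cat_proj_dirac th1 Dl d x 1 = (if x \<le> th1 then 1 else if atom th1 Dl d \<le> x then 0
      else if x \<le> th1 + Dl then (th1 + Dl - x) / Dl else 0)"
    unfolding cat_proj_dirac_def using assms by (auto simp: atom_def)
  moreover have "atom th1 Dl 2 = th1 + Dl"
    by (simp add: atom_def)
  ultimately show ?thesis
    using assms unfolding unit_clamp_def by (auto simp: field_simps)
qed

lemma cat_proj_dirac_interior:
  assumes "Dl > 0" "2 \<le> k" "k + 1 \<le> d"
  shows "cat_proj_dirac th1 Dl d x k
           = unit_clamp ((atom th1 Dl (k + 1) - x) / Dl) - unit_clamp ((atom th1 Dl k - x) / Dl)"
proof -
  define a where "a = atom th1 Dl k"
  define z where "z = (a - x) / Dl"
  have next_atom: "atom th1 Dl (k + 1) = a + Dl"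
   and prev_atom: "atom th1 Dl (k - 1) = a - Dl"
    using assms by (simp_all add: a_def atom_eq algebra_simps of_nat_diff)
  have "Dl * (real k + 1) \<le> Dl * real d" "Dl \<le> Dl * (real k - 1)"
    using assms by (simp_all add: mult_left_mono del: of_nat_Suc)
  then have "atom th1 Dl 1 \<le> a - Dl" "a + Dl \<le> atom th1 Dl d"
    using assms by (simp_all add: a_def atom_eq atom_def algebra_simps)
  then have outside: "x \<le> atom th1 Dl 1 \<Longrightarrow> 1 \<le> z" "atom th1 Dl d \<le> x \<Longrightarrow> z \<le> -1"
    using assms(1) unfolding z_def by (simp_all add: field_simps)
  have "(a - Dl \<le> x \<and> x \<le> a) \<longleftrightarrow> (0 \<le> z \<and> z \<le> 1)"
       "(a \<le> x \<and> x \<le> a + Dl) \<longleftrightarrow> (-1 \<le> z \<and> z \<le> 0)"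
       "(x - (a - Dl)) / Dl = 1 - z" "(a + Dl - x) / Dl = z + 1"
    using assms(1) unfolding z_def by (auto simp: field_simps)
  then have "cat_proj_dirac th1 Dl d x k = (if x \<le> atom th1 Dl 1 \<or> atom th1 Dl d \<le> x then 0
      else if 0 \<le> z \<and> z \<le> 1 then 1 - z else if -1 \<le> z \<and> z \<le> 0 then z + 1 else 0)"
    using assms unfolding cat_proj_dirac_def prev_atom next_atom a_def[symmetric] by auto
  moreover have "(atom th1 Dl (k + 1) - x) / Dl = z + 1"
    using assms(1) unfolding next_atom z_def by (simp add: field_simps)
  ultimately show ?thesis
    using outside unfolding unit_clamp_def a_def[symmetric] z_def[symmetric] by auto
qed

lemma cdf_cat_proj_dirac:
  assumes "Dl > 0" "1 \<le> k" "k + 1 \<le> d"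
  shows "cdf (cat_proj_dirac th1 Dl d x) k = unit_clamp ((atom th1 Dl (k + 1) - x) / Dl)"
  using assms(2,3)
proof (induction k rule: nat_induct_at_least)
  case base
  then show ?case
    using cat_proj_dirac_first[OF assms(1)] by (simp add: cdf_def numeral_2_eq_2)
next
  case (Suc k)
  then have "cdf (cat_proj_dirac th1 Dl d x) (Suc k)
      = unit_clamp ((atom th1 Dl (k + 1) - x) / Dl) + cat_proj_dirac th1 Dl d x (Suc k)"
    by (simp add: cdf_def)
  then show ?case
    using cat_proj_dirac_interior[OF assms(1), of "Suc k" d th1 x] Suc by simp
qed

definition shift_kernel :: "real \<Rightarrow> nat \<Rightarrow> nat \<Rightarrow> real" where
  "shift_kernel \<beta> k j = unit_clamp (real k + 1 - real j - \<beta>)"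

lemma cdf_Lshift:
  assumes "Dl > 0" "1 \<le> k" "k + 1 \<le> d"
  shows "cdf (Lshift th1 Dl d b u) k = (\<Sum>j=1..d. u j * shift_kernel (b / Dl) k j)"
proof -
  have "cdf (Lshift th1 Dl d b u) k
      = (\<Sum>j=1..d. u j * cdf (cat_proj_dirac th1 Dl d (atom th1 Dl j + b)) k)"
    unfolding cdf_def Lshift_def by (subst sum.swap) (simp add: sum_distrib_left)
  also have "\<dots> = (\<Sum>j=1..d. u j * shift_kernel (b / Dl) k j)"
  proof (rule sum.cong[OF refl])
    fix j assume "j \<in> {1..d}"
    then have "(atom th1 Dl (k + 1) - (atom th1 Dl j + b)) / Dl = real k + 1 - real j - b / Dl"
      using assms by (simp add: atom_eq field_simps)
    then show "u j * cdf (cat_proj_dirac th1 Dl d (atom th1 Dl j + b)) k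
        = u j * shift_kernel (b / Dl) k j"
      unfolding shift_kernel_def cdf_cat_proj_dirac[OF assms] by simp
  qed
  finally show ?thesis .
qed

lemma shift_kernel_step_nonneg: "0 \<le> shift_kernel \<beta> k j - shift_kernel \<beta> k (Suc j)"
  unfolding shift_kernel_def by (simp add: unit_clamp_mono)

lemma sum_shift_kernel_steps_row: "(\<Sum>j=1..n. shift_kernel \<beta> k j - shift_kernel \<beta> k (Suc j)) \<le> 1"
proof -
  have "(\<Sum>j=1..n. shift_kernel \<beta> k j - shift_kernel \<beta> k (Suc j))
      = shift_kernel \<beta> k 1 - shift_kernel \<beta> k (Suc n)"
    using sum_Suc_diff[of 1 n "\<lambda>j. - shift_kernel \<beta> k j"] by simp
  then show ?thesis
    unfolding shift_kernel_def using unit_clamp_bounds by (smt (verit))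
qed

lemma sum_shift_kernel_steps_col: "(\<Sum>k=1..n. shift_kernel \<beta> k j - shift_kernel \<beta> k (Suc j)) \<le> 1"
proof -
  define F where "F k = unit_clamp (real k - real j - \<beta>)" for k
  have "shift_kernel \<beta> k j - shift_kernel \<beta> k (Suc j) = F (Suc k) - F k" for k
    unfolding shift_kernel_def F_def by (simp add: algebra_simps)
  then have "(\<Sum>k=1..n. shift_kernel \<beta> k j - shift_kernel \<beta> k (Suc j)) = F (Suc n) - F 1"
    using sum_Suc_diff[of 1 n F] by simp
  then show ?thesis
    unfolding F_def using unit_clamp_bounds by (smt (verit))
qed

lemma shift_kernel_shift_bounds:
  assumes "\<beta> \<le> \<beta>'"
  shows "0 \<le> shift_kernel \<beta> k j - shift_kernel \<beta>' k j"
    and "shift_kernel \<beta> k j - shift_kernel \<beta>' k j \<le> \<beta>' - \<beta>"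
  using assms unit_clamp_diff_le[of "real k + 1 - real j - \<beta>'" "real k + 1 - real j - \<beta>"]
  unfolding shift_kernel_def by (simp_all add: unit_clamp_mono)

lemma sum_shift_kernel_shift_le:
  assumes "\<beta> \<le> \<beta>'"
  shows "(\<Sum>k=1..n. shift_kernel \<beta> k j - shift_kernel \<beta>' k j) \<le> \<beta>' - \<beta>"
proof -
  have "(\<Sum>k=1..n. shift_kernel \<gamma> k j) = max 0 (real n + 1 - real j - \<gamma>) - max 0 (1 - real j - \<gamma>)"
    for \<gamma>
    using sum_unit_clamp_shifts[where n = n and c = "1 - real j - \<gamma>"]
    unfolding shift_kernel_def by (simp add: algebra_simps)
  then show ?thesis
    using assms by (simp add: sum_subtractf max_def)
qed

lemma cdf_Lshift_diff:
  assumes "Dl > 0" "u \<in> simplex d" "v \<in> simplex d" "k \<in> {1..d-1}"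
  shows "cdf (Lshift th1 Dl d b u) k - cdf (Lshift th1 Dl d b v) k
           = (\<Sum>j=1..d-1. (shift_kernel (b / Dl) k j - shift_kernel (b / Dl) k (Suc j))
                             * (cdf u j - cdf v j))"
proof -
  let ?K = "shift_kernel (b / Dl) k"
  have k: "1 \<le> k" "k + 1 \<le> d"
    using assms(4) by auto
  have "cdf (Lshift th1 Dl d b u) k - cdf (Lshift th1 Dl d b v) k = (\<Sum>j=1..d. (u j - v j) * ?K j)"
    by (simp add: cdf_Lshift[OF assms(1) k] sum_subtractf left_diff_distrib)
  also have "\<dots> = (\<Sum>i=1..d. u i - v i) * ?K d + (\<Sum>j=1..d-1. (\<Sum>i=1..j. u i - v i) * (?K j - ?K (Suc j)))"
    by (rule summation_by_parts)
  also have "\<dots> = (\<Sum>j=1..d-1. (?K j - ?K (Suc j)) * (cdf u j - cdf v j))"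
    using assms(2,3) by (simp add: simplex_def cdf_def sum_subtractf mult.commute)
  finally show ?thesis .
qed

lemma cramer_Lshift_le:
  assumes "Dl > 0" "u \<in> simplex d" "v \<in> simplex d"
  shows "cramer Dl d (Lshift th1 Dl d b u) (Lshift th1 Dl d b v) \<le> cramer Dl d u v"
proof -
  let ?W = "\<lambda>k j. shift_kernel (b / Dl) k j - shift_kernel (b / Dl) k (Suc j)"
  have "(\<Sum>k=1..d-1. (cdf (Lshift th1 Dl d b u) k - cdf (Lshift th1 Dl d b v) k)\<^sup>2)
      = (\<Sum>k=1..d-1. (\<Sum>j=1..d-1. ?W k j * (cdf u j - cdf v j))\<^sup>2)"
    using assms by (intro sum.cong) (simp_all add: cdf_Lshift_diff)
  also have "\<dots> \<le> (\<Sum>j=1..d-1. (cdf u j - cdf v j)\<^sup>2)"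
    by (intro sum_squares_substochastic_le shift_kernel_step_nonneg
        sum_shift_kernel_steps_row sum_shift_kernel_steps_col)
  finally show ?thesis
    unfolding cramer_def using assms(1) by (intro real_sqrt_le_mono mult_left_mono) auto
qed

lemma shift_kernel_mixture_shift_bounds:
  assumes "v \<in> simplex d" "\<beta> \<le> \<beta>'"
  defines "D \<equiv> \<lambda>k. \<Sum>j=1..d. v j * (shift_kernel \<beta> k j - shift_kernel \<beta>' k j)"
  shows "0 \<le> D k" and "D k \<le> \<beta>' - \<beta>" and "(\<Sum>k=1..n. D k) \<le> \<beta>' - \<beta>"
proof -
  have v: "\<And>j. j \<in> {1..d} \<Longrightarrow> 0 \<le> v j" "(\<Sum>j=1..d. v j) = 1"
    using assms(1) by (auto simp: simplex_def)
  then have mass: "(\<Sum>j=1..d. v j * (\<beta>' - \<beta>)) = \<beta>' - \<beta>"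
    by (simp flip: sum_distrib_right)
  show "0 \<le> D k"
    unfolding D_def using v(1) assms(2) shift_kernel_shift_bounds(1)
    by (intro sum_nonneg mult_nonneg_nonneg) auto
  have "D k \<le> (\<Sum>j=1..d. v j * (\<beta>' - \<beta>))"
    unfolding D_def using v(1) assms(2) shift_kernel_shift_bounds(2)
    by (intro sum_mono mult_left_mono) auto
  then show "D k \<le> \<beta>' - \<beta>"
    using mass by simp
  have "(\<Sum>k=1..n. D k) = (\<Sum>j=1..d. v j * (\<Sum>k=1..n. shift_kernel \<beta> k j - shift_kernel \<beta>' k j))"
    unfolding D_def by (subst sum.swap) (simp add: sum_distrib_left)
  also have "\<dots> \<le> (\<Sum>j=1..d. v j * (\<beta>' - \<beta>))"
    using v(1) assms(2) sum_shift_kernel_shift_le by (intro sum_mono mult_left_mono) auto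
  finally show "(\<Sum>k=1..n. D k) \<le> \<beta>' - \<beta>"
    using mass by simp
qed

lemma cramer_Lshift_shift_le:
  assumes "Dl > 0" "v \<in> simplex d" "b \<le> b'"
  shows "cramer Dl d (Lshift th1 Dl d b v) (Lshift th1 Dl d b' v) \<le> (b' - b) / sqrt Dl"
proof -
  define \<beta> \<beta>' where "\<beta> = b / Dl" and "\<beta>' = b' / Dl"
  have "\<beta> \<le> \<beta>'"
    using assms by (simp add: \<beta>_def \<beta>'_def divide_right_mono)
  define D where "D k = (\<Sum>j=1..d. v j * (shift_kernel \<beta> k j - shift_kernel \<beta>' k j))" for k
  have cdf_diff: "cdf (Lshift th1 Dl d b v) k - cdf (Lshift th1 Dl d b' v) k = D k"
    if "k \<in> {1..d-1}" for k
  proof -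
    have "1 \<le> k" "k + 1 \<le> d"
      using that by auto
    then show ?thesis
      by (simp add: cdf_Lshift[OF assms(1)] D_def \<beta>_def \<beta>'_def sum_subtractf right_diff_distrib)
  qed
  have "(\<Sum>k=1..d-1. (D k)\<^sup>2) \<le> (\<beta>' - \<beta>)\<^sup>2"
    using shift_kernel_mixture_shift_bounds[OF assms(2) \<open>\<beta> \<le> \<beta>'\<close>]
    by (intro sum_squares_le_of_sum_le) (simp_all add: D_def)
  then have "cramer Dl d (Lshift th1 Dl d b v) (Lshift th1 Dl d b' v) \<le> sqrt (Dl * (\<beta>' - \<beta>)\<^sup>2)"
    unfolding cramer_def using assms(1) cdf_diff
    by (intro real_sqrt_le_mono mult_left_mono) auto
  also have "\<dots> = sqrt (((b' - b) / sqrt Dl)\<^sup>2)"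
    using assms(1)
    by (simp add: \<beta>_def \<beta>'_def power_divide power2_eq_square field_simps flip: diff_divide_distrib)
  also have "\<dots> = (b' - b) / sqrt Dl"
    using assms by simp
  finally show ?thesis .
qed

lemma cramer_commute: "cramer Dl d u v = cramer Dl d v u"
  unfolding cramer_def by (simp add: power2_commute)

lemma cramer_triangle:
  assumes "0 \<le> Dl"
  shows "cramer Dl d u w \<le> cramer Dl d u v + cramer Dl d v w"
proof -
  have L2: "cramer Dl d u' v' = sqrt Dl * L2_set (\<lambda>k. cdf u' k - cdf v' k) {1..d-1}" for u' v'
    unfolding cramer_def L2_set_def using assms by (simp add: real_sqrt_mult)
  show ?thesis
    unfolding L2 distrib_left[symmetric] using assms
    by (intro mult_left_mono order.trans[OF _ L2_set_triangle_ineq]) simp_all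
qed

lemma cramer_Lshift_pair_le:
  assumes "Dl > 0" "u \<in> simplex d" "v \<in> simplex d"
  shows "cramer Dl d (Lshift th1 Dl d b u) (Lshift th1 Dl d b' v) \<le> cramer Dl d u v + \<bar>b - b'\<bar> / sqrt Dl"
proof -
  have "cramer Dl d (Lshift th1 Dl d b v) (Lshift th1 Dl d b' v) \<le> \<bar>b - b'\<bar> / sqrt Dl"
  proof (cases "b \<le> b'")
    case True
    then show ?thesis
      using cramer_Lshift_shift_le[OF assms(1,3)] by simp
  next
    case False
    then show ?thesis
      using cramer_Lshift_shift_le[OF assms(1,3), of b' b] by (simp add: cramer_commute)
  qed
  then show ?thesis
    using cramer_triangle[of Dl d "Lshift th1 Dl d b u" "Lshift th1 Dl d b' v" "Lshift th1 Dl d b v"]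
      cramer_Lshift_le[OF assms, of th1 b] assms(1) by linarith
qed

lemma cramer_le_cramer_inf: "i \<in> {1..m} \<Longrightarrow> cramer Dl d (p i) (q i) \<le> cramer_inf Dl d m p q"
  unfolding cramer_inf_def by (intro Max_ge) auto

lemma cramer_inf_leI:
  assumes "1 \<le> m" "\<And>i. i \<in> {1..m} \<Longrightarrow> cramer Dl d (p i) (q i) \<le> c"
  shows "cramer_inf Dl d m p q \<le> c"
  unfolding cramer_inf_def using assms by (subst Max_le_iff) auto

lemma cramer_Hop_le:
  assumes "Dl > 0" "i \<in> {1..m}" "s' \<in> {1..m}" "p \<in> fam_simplex m d" "q \<in> fam_simplex m d"
  shows "cramer Dl d (Hop th1 Dl d g p (s, r, s') i) (Hop th1 Dl d g' q (s, r, s') i)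
           \<le> cramer_inf Dl d m p q + \<bar>g - g'\<bar> / sqrt Dl"
proof (cases "i = s")
  case True
  have simplex: "p s' \<in> simplex d" "q s' \<in> simplex d"
    using assms(3-5) by (auto simp: fam_simplex_def)
  have "cramer Dl d (Hop th1 Dl d g p (s, r, s') i) (Hop th1 Dl d g' q (s, r, s') i)
      \<le> cramer Dl d (p s') (q s') + \<bar>g - g'\<bar> / sqrt Dl"
    using cramer_Lshift_pair_le[OF assms(1) simplex, of th1 "r - g" "r - g'"] True
    by (simp add: Hop_def abs_minus_commute)
  then show ?thesis
    using cramer_le_cramer_inf[OF assms(3), of Dl d p q] by linarith
next
  case False
  have "0 \<le> \<bar>g - g'\<bar> / sqrt Dl"
    using assms(1) by simp
  then show ?thesis
    using False cramer_le_cramer_inf[OF assms(2), of Dl d p q] by (simp add: Hop_def)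
qed

theorem proposition7:
  fixes m d :: nat and th1 Dl lam g g' r :: real and s s' :: nat
    and p q :: "nat \<Rightarrow> nat \<Rightarrow> real"
  assumes "m \<ge> 1" and "d \<ge> 1" and "Dl > 0"
    and "lam \<ge> Dl powr (-1/2)"
    and "s \<in> {1..m}" and "s' \<in> {1..m}" and "r \<in> {0..1}"
    and "p \<in> fam_simplex m d" and "g \<in> {0..1}"
    and "q \<in> fam_simplex m d" and "g' \<in> {0..1}"
  shows "d_lam lam Dl d m (Hop th1 Dl d g p (s, r, s'), r) (Hop th1 Dl d g' q (s, r, s'), r)
           \<le> d_lam lam Dl d m (p, g) (q, g')"
proof -
  have "Dl powr (-1/2) = 1 / sqrt Dl"
    using assms(3) by (simp add: powr_minus_divide powr_half_sqrt)
  then have "\<bar>g - g'\<bar> / sqrt Dl \<le> lam * \<bar>g - g'\<bar>"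
    using assms(4) mult_right_mono[of "1 / sqrt Dl" lam "\<bar>g - g'\<bar>"] by simp
  then have "cramer_inf Dl d m (Hop th1 Dl d g p (s, r, s')) (Hop th1 Dl d g' q (s, r, s'))
      \<le> cramer_inf Dl d m p q + lam * \<bar>g - g'\<bar>"
    using cramer_Hop_le[OF assms(3) _ assms(6,8,10)]
    by (intro cramer_inf_leI[OF assms(1)]) (meson add_left_mono order.trans)
  then show ?thesis
    unfolding d_lam_def by simp
qed

end
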